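(* For every epistemic transition system, every history $h$ of it, all coalitions $D\subseteq C$ with $C\neq\varnothing$ and every formula $\phi\in\Phi$: if $h\Vdash\mathsf{H}_D\phi$, then $h\Vdash\mathsf{H}_D\mathsf{K}_C\phi$.
   Context: Fix a set of agents $\mathcal{A}$; a coalition is a subset of $\mathcal{A}$. Language $\Phi$: $\phi ::= p \mid \neg\phi \mid \phi\to\phi \mid \mathsf{K}_C\phi \mid \mathsf{H}_C\phi$ ($C\subseteq\mathcal{A}$). An epistemic transition system is a tuple $(W,\{\sim_a\}_{a\in\mathcal{A}},V,M,\pi)$ with $W$ a set of states, each $\sim_a$ an equivalence relation on $W$, $V$ a nonempty set, $M\subseteq W\times V^{\mathcal{A}}\times W$, $\pi$ mapping propositional variables to subsets of $W$. For profiles $\mathbf{s}_1\in V^{C_1},\mathbf{s}_2\in V^{C_2}$ and $C\subseteq C_1\cap C_2$, $\mathbf{s}_1=_C\mathbf{s}_2$ means $(\mathbf{s}_1)_a=(\mathbf{s}_2)_a$ for all $a\in C$. A history is a sequence $(w_0,\mathbf{s}_1,w_1,\dots,\mathbf{s}_n,w_n)$, $n\ge0$, with $w_i\in W$, $\mathbf{s}_i\in V^{\mathcal{A}}$, $(w_i,\mathbf{s}_{i+1},w_{i+1})\in M$; $hd(h)$ is its last element, and $h::\mathbf{s}::w$ denotes extension. $h\approx_a h'$ iff the histories have the same length $n$, their $i$-th states are $\sim_a$-related for all $i$, and their $i$-th profiles agree at $a$ for all $i$; $h\approx_C h'$ iff $h\approx_a h'$ for all $a\in C$. Satisfaction: $h\Vdash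 p$ iff $hd(h)\in\pi(p)$; Boolean clauses standard; $h\Vdash\mathsf{K}_C\phi$ iff $h'\Vdash\phi$ for all histories $h'$ with $h\approx_C h'$; $h\Vdash\mathsf{H}_C\phi$ iff there is $\mathbf{s}\in V^C$ such that for every history $h'::\mathbf{s}'::w'$ with $h\approx_C h'$ and $\mathbf{s}=_C\mathbf{s}'$, $h'::\mathbf{s}'::w'\Vdash\phi$. *)

theory Defs
  imports Main
begin

text \<open>Agents are the elements of the type 'a (the fixed set of agents); coalitions are
  sets of agents. Action profiles are functions
  'a \<Rightarrow> 'v; a profile on a coalition C is any such function whose values on C lie in V
  (values outside C are irrelevant).\<close>

datatype ('p, 'a) form =
    Var 'p
  | Neg "('p, 'a) form"
  | Imp "('p, 'a) form" "('p, 'a) form"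
  | Know "'a set" "('p, 'a) form"
  | Hasknow "'a set" "('p, 'a) form"

text \<open>Epistemic transition system (W = UNIV :: 'w set, sim a = \<sim>_a, V, M, pi).\<close>
definition is_ets ::
  "('a \<Rightarrow> ('w \<times> 'w) set) \<Rightarrow> 'v set \<Rightarrow> ('w \<times> ('a \<Rightarrow> 'v) \<times> 'w) set \<Rightarrow> bool" where
  "is_ets sim V M \<longleftrightarrow>
     (\<forall>a. equiv UNIV (sim a)) \<and> V \<noteq> {} \<and>
     (\<forall>w s w'. (w, s, w') \<in> M \<longrightarrow> (\<forall>a. s a \<in> V))"

text \<open>A history (w0, s1, w1, ..., sn, wn) is represented as (w0, [(s1,w1),...,(sn,wn)]).\<close>
type_synonym ('w, 'a, 'v) hist = "'w \<times> (('a \<Rightarrow> 'v) \<times> 'w) list"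

fun steps_ok :: "('w \<times> ('a \<Rightarrow> 'v) \<times> 'w) set \<Rightarrow> 'w \<Rightarrow> (('a \<Rightarrow> 'v) \<times> 'w) list \<Rightarrow> bool" where
  "steps_ok M w [] = True"
| "steps_ok M w ((s, w') # xs) = ((w, s, w') \<in> M \<and> steps_ok M w' xs)"

definition is_history :: "('w \<times> ('a \<Rightarrow> 'v) \<times> 'w) set \<Rightarrow> ('w, 'a, 'v) hist \<Rightarrow> bool" where
  "is_history M h \<longleftrightarrow> steps_ok M (fst h) (snd h)"

definition hd_hist :: "('w, 'a, 'v) hist \<Rightarrow> 'w" where
  "hd_hist h = (if snd h = [] then fst h else snd (last (snd h)))"

definition ext_hist :: "('w, 'a, 'v) hist \<Rightarrow> ('a \<Rightarrow> 'v) \<Rightarrow> 'w \<Rightarrow> ('w, 'a, 'v) hist" where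
  "ext_hist h s w = (fst h, snd h @ [(s, w)])"

definition indist_agent :: "('a \<Rightarrow> ('w \<times> 'w) set) \<Rightarrow> 'a \<Rightarrow> ('w, 'a, 'v) hist \<Rightarrow> ('w, 'a, 'v) hist \<Rightarrow> bool" where
  "indist_agent sim a h h' \<longleftrightarrow>
     length (snd h) = length (snd h') \<and> (fst h, fst h') \<in> sim a \<and>
     (\<forall>i < length (snd h). (snd (snd h ! i), snd (snd h' ! i)) \<in> sim a \<and>
                            fst (snd h ! i) a = fst (snd h' ! i) a)"

definition indist :: "('a \<Rightarrow> ('w \<times> 'w) set) \<Rightarrow> 'a set \<Rightarrow> ('w, 'a, 'v) hist \<Rightarrow> ('w, 'a, 'v) hist \<Rightarrow> bool" where
  "indist sim C h h' \<longleftrightarrow> length (snd h) = length (snd h') \<and> (\<forall>a\<in>C. indist_agent sim a h h')"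

fun sat :: "('a \<Rightarrow> ('w \<times> 'w) set) \<Rightarrow> 'v set \<Rightarrow> ('w \<times> ('a \<Rightarrow> 'v) \<times> 'w) set \<Rightarrow>
            ('p \<Rightarrow> 'w set) \<Rightarrow> ('w, 'a, 'v) hist \<Rightarrow> ('p, 'a) form \<Rightarrow> bool" where
  "sat sim V M \<pi> h (Var p) = (hd_hist h \<in> \<pi> p)"
| "sat sim V M \<pi> h (Neg \<phi>) = (\<not> sat sim V M \<pi> h \<phi>)"
| "sat sim V M \<pi> h (Imp \<phi> \<psi>) = (sat sim V M \<pi> h \<phi> \<longrightarrow> sat sim V M \<pi> h \<psi>)"
| "sat sim V M \<pi> h (Know C \<phi>) =
     (\<forall>h'. is_history M h' \<and> indist sim C h h' \<longrightarrow> sat sim V M \<pi> h' \<phi>)"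
| "sat sim V M \<pi> h (Hasknow C \<phi>) =
     (\<exists>s. (\<forall>a\<in>C. s a \<in> V) \<and>
        (\<forall>h' s' w'. is_history M (ext_hist h' s' w') \<and> indist sim C h h' \<and> (\<forall>a\<in>C. s a = s' a)
            \<longrightarrow> sat sim V M \<pi> (ext_hist h' s' w') \<phi>))"

end

theory Submission
  imports Defs
begin

text \<open>Keep the strategy \<open>s\<close> witnessing \<open>H\<^sub>D \<phi>\<close>. A history that is \<open>C\<close>-indistinguishable
  from an outcome \<open>h'::s'::w'\<close> of \<open>s\<close> is itself an extension \<open>h\<^sub>0::s\<^sub>0::w\<^sub>0\<close>, and since
  \<open>D \<subseteq> C\<close> it is \<open>D\<close>-indistinguishable from it; hence \<open>h \<approx>\<^sub>D h\<^sub>0\<close> by transitivity and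
  \<open>s\<^sub>0\<close> agrees with \<open>s\<close> on \<open>D\<close>, so it is again an outcome of \<open>s\<close> and satisfies \<open>\<phi>\<close>.\<close>

lemma indist_mono:
  assumes "indist sim C h1 h2" and "D \<subseteq> C"
  shows "indist sim D h1 h2"
  using assms by (auto simp: indist_def)

lemma indist_trans:
  assumes "\<And>a. trans (sim a)"
    and "indist sim C h1 h2" and "indist sim C h2 h3"
  shows "indist sim C h1 h3"
  using assms unfolding indist_def indist_agent_def by (metis transD)

lemma indist_ext_hist_iff:
  "indist sim C (ext_hist h1 s1 w1) (ext_hist h2 s2 w2) \<longleftrightarrow>
     indist sim C h1 h2 \<and> (\<forall>a\<in>C. s1 a = s2 a \<and> (w1, w2) \<in> sim a)"
proof (cases "length (snd h1) = length (snd h2)")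
  case True
  have "indist_agent sim a (ext_hist h1 s1 w1) (ext_hist h2 s2 w2) \<longleftrightarrow>
          indist_agent sim a h1 h2 \<and> s1 a = s2 a \<and> (w1, w2) \<in> sim a" for a
    using True
    by (auto simp: indist_agent_def ext_hist_def nth_append less_Suc_eq
             dest: spec[of _ "length (snd h2)"])
  with True show ?thesis by (auto simp: indist_def ext_hist_def)
qed (auto simp: indist_def ext_hist_def)

lemma indist_ext_hist_right:
  assumes "indist sim C (ext_hist h s w) h'"
  obtains h0 s0 w0 where "h' = ext_hist h0 s0 w0" and "indist sim C h h0"
    and "\<forall>a\<in>C. s a = s0 a"
proof -
  have "snd h' \<noteq> []"
    using assms by (auto simp: indist_def ext_hist_def)
  then have "h' = ext_hist (fst h', butlast (snd h')) (fst (last (snd h'))) (snd (last (snd h')))"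
    by (simp add: ext_hist_def)
  then show ?thesis
    using assms that indist_ext_hist_iff[of sim C h s w] by metis
qed

theorem lemma13:
  fixes sim :: "'a \<Rightarrow> ('w \<times> 'w) set" and V :: "'v set"
    and M :: "('w \<times> ('a \<Rightarrow> 'v) \<times> 'w) set" and \<pi> :: "'p \<Rightarrow> 'w set"
    and h :: "('w, 'a, 'v) hist" and C D :: "'a set" and \<phi> :: "('p, 'a) form"
  assumes "is_ets sim V M"
    and "is_history M h"
    and "D \<subseteq> C" and "C \<noteq> {}"
    and "sat sim V M \<pi> h (Hasknow D \<phi>)"
  shows "sat sim V M \<pi> h (Hasknow D (Know C \<phi>))"
proof -
  have trans_sim: "trans (sim a)" for a
    using assms(1) by (simp add: is_ets_def equiv_def)
  from assms(5) obtain s where sV: "\<forall>a\<in>D. s a \<in> V" and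
    outcome: "\<And>h' s' w'. is_history M (ext_hist h' s' w') \<Longrightarrow> indist sim D h h' \<Longrightarrow>
      \<forall>a\<in>D. s a = s' a \<Longrightarrow> sat sim V M \<pi> (ext_hist h' s' w') \<phi>"
    by auto
  have "sat sim V M \<pi> h'' \<phi>"
    if "indist sim D h h'" and "\<forall>a\<in>D. s a = s' a"
      and "is_history M h''" and "indist sim C (ext_hist h' s' w') h''" for h' s' w' h''
  proof -
    from indist_mono[OF that(4) assms(3)] obtain h0 s0 w0 where
      "h'' = ext_hist h0 s0 w0" "indist sim D h' h0" "\<forall>a\<in>D. s' a = s0 a"
      by (rule indist_ext_hist_right)
    moreover have "indist sim D h h0"
      using indist_trans[OF trans_sim that(1) \<open>indist sim D h' h0\<close>] .
    ultimately show ?thesis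
      using that(2,3) outcome by auto
  qed
  with sV show ?thesis
    by (simp del: prod.collapse) blast
qed

end
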